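(* Let $S_X,S_Y$ be finite nonempty action sets, $\varphi:S_X\times S_Y\to\mathbb{R}$, and $\lambda\in[0,1)$. Suppose that $\sigma_X:\mathcal{H}\to\Delta(S_X)$ is a $(\varphi,\lambda)$-autocratic behavioral strategy for player $X$ (of arbitrary memory). Then there exists a two-point reactive learning strategy for $X$ that is also $(\varphi,\lambda)$-autocratic.
   Context: Two players $X,Y$ play a repeated game with finite action sets $S_X,S_Y$; $\Delta(S)$ denotes the probability distributions on $S$. $\varphi$ is extended to mixed actions in its first argument by $\varphi(\tau_X,s_Y)=\mathbb{E}_{s_X\sim\tau_X}[\varphi(s_X,s_Y)]$. Histories: $\mathcal{H}=\bigcup_{T\ge0}(S_X\times S_Y)^T$ (including the empty history). A behavioral strategy for $X$ is a map $\sigma_X:\mathcal{H}\to\Delta(S_X)$, and similarly for $Y$. In each round $t=0,1,2,\dots$ the players independently draw $s_X^t\sim\sigma_X[h^t]$ and $s_Y^t\sim\sigma_Y[h^t]$, where $h^t$ is the history of realized action pairs in rounds $0,\dots,t-1$; $\mathbb{E}_{\sigma_X,\sigma_Y}$ denotes expectation over the resulting random play. For $\lambda\in[0,1)$, $\sigma_X$ is $(\varphi,\lambda)$-autocratic if for every behavioral strategy $\sigma_Y$ of $Y$, $\mathbb{E}_{\sigma_X,\sigma_Y}\big[(1-\lambda)\sum_{t\ge0}\lambda^t\varphi(s_X^t,s_Y^t)\big]=0$. A reactive learning strategy for $X$ is a pair $(\sigma_X^0,\sigma_X^* )$ with $\sigma_X^0\in\Delta(S_X)$ and $\sigma_X^*:\Delta(S_X)\times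 S_Y\to\Delta(S_X)$; it is played by using the mixed action $\tau_X^0=\sigma_X^0$ in round $0$ and $\tau_X^{t+1}=\sigma_X^*[\tau_X^t,s_Y^t]$ in round $t+1$, where $s_Y^t$ is $Y$'s realized action in round $t$. It is a two-point reactive learning strategy if there exist $\tau_X^+,\tau_X^-\in\Delta(S_X)$, $p_0\in[0,1]$ and $p^*:[0,1]\times S_Y\to[0,1]$ such that $\sigma_X^0=p_0\tau_X^++(1-p_0)\tau_X^-$ and $\sigma_X^*[p\tau_X^++(1-p)\tau_X^-,s_Y]=p^*[p,s_Y]\tau_X^++(1-p^*[p,s_Y])\tau_X^-$ for all $p\in[0,1]$, $s_Y\in S_Y$ (so every mixed action played is a mixture of $\tau_X^+$ and $\tau_X^-$). *)

theory Defs
  imports "HOL-Probability.Probability"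
begin

(* Action sets S_X, S_Y are the finite (hence nonempty) types 'x, 'y.
   Mixed actions Delta(S) are pmfs.  Histories are lists of action pairs in
   chronological order (round 0 first). *)

type_synonym ('x, 'y) history = "('x \<times> 'y) list"
type_synonym ('x, 'y, 'a) behav_strategy = "('x, 'y) history \<Rightarrow> 'a pmf"

fun hist_pmf :: "('x, 'y, 'x) behav_strategy \<Rightarrow> ('x, 'y, 'y) behav_strategy
                  \<Rightarrow> nat \<Rightarrow> ('x, 'y) history pmf" where
  "hist_pmf \<sigma>X \<sigma>Y 0 = return_pmf []"
| "hist_pmf \<sigma>X \<sigma>Y (Suc t) =
     bind_pmf (hist_pmf \<sigma>X \<sigma>Y t) (\<lambda>h.
       bind_pmf (\<sigma>X h) (\<lambda>x.
         bind_pmf (\<sigma>Y h) (\<lambda>y. return_pmf (h @ [(x, y)]))))"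

(* E[phi(s_X^t, s_Y^t)]: the round-t action pair is the last entry of h^{t+1} *)
definition stage_payoff ::
  "('x \<Rightarrow> 'y \<Rightarrow> real) \<Rightarrow> ('x, 'y, 'x) behav_strategy \<Rightarrow> ('x, 'y, 'y) behav_strategy
   \<Rightarrow> nat \<Rightarrow> real" where
  "stage_payoff \<phi> \<sigma>X \<sigma>Y t =
     measure_pmf.expectation (hist_pmf \<sigma>X \<sigma>Y (Suc t)) (\<lambda>h. case_prod \<phi> (last h))"

(* E[(1-lambda) sum_t lambda^t phi(s^t)], the (bounded) discounted sum's expectation
   computed termwise *)
definition discounted_payoff ::
  "('x \<Rightarrow> 'y \<Rightarrow> real) \<Rightarrow> real \<Rightarrow> ('x, 'y, 'x) behav_strategy \<Rightarrow> ('x, 'y, 'y) behav_strategy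
   \<Rightarrow> real" where
  "discounted_payoff \<phi> \<delta> \<sigma>X \<sigma>Y = (1 - \<delta>) * (\<Sum>t. \<delta> ^ t * stage_payoff \<phi> \<sigma>X \<sigma>Y t)"

definition autocratic ::
  "('x \<Rightarrow> 'y \<Rightarrow> real) \<Rightarrow> real \<Rightarrow> ('x, 'y, 'x) behav_strategy \<Rightarrow> bool" where
  "autocratic \<phi> \<delta> \<sigma>X \<longleftrightarrow> (\<forall>\<sigma>Y :: ('x, 'y, 'y) behav_strategy. discounted_payoff \<phi> \<delta> \<sigma>X \<sigma>Y = 0)"

definition reactive_strategy ::
  "'x pmf \<Rightarrow> ('x pmf \<Rightarrow> 'y \<Rightarrow> 'x pmf) \<Rightarrow> ('x, 'y, 'x) behav_strategy" where
  "reactive_strategy \<sigma>0 \<sigma>s h = foldl (\<lambda>\<tau> xy. \<sigma>s \<tau> (snd xy)) \<sigma>0 h"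

definition mix :: "real \<Rightarrow> 'x pmf \<Rightarrow> 'x pmf \<Rightarrow> 'x pmf" where
  "mix p \<tau>p \<tau>m = bind_pmf (bernoulli_pmf p) (\<lambda>b. if b then \<tau>p else \<tau>m)"

definition two_point ::
  "'x pmf \<Rightarrow> ('x pmf \<Rightarrow> 'y \<Rightarrow> 'x pmf) \<Rightarrow> bool" where
  "two_point \<sigma>0 \<sigma>s \<longleftrightarrow>
     (\<exists>\<tau>p \<tau>m p0 (pstar :: real \<Rightarrow> 'y \<Rightarrow> real).
        p0 \<in> {0..1} \<and> (\<forall>p \<in> {0..1}. \<forall>y. pstar p y \<in> {0..1}) \<and>
        \<sigma>0 = mix p0 \<tau>p \<tau>m \<and>
        (\<forall>p \<in> {0..1}. \<forall>y. \<sigma>s (mix p \<tau>p \<tau>m) y = mix (pstar p y) \<tau>p \<tau>m))"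

end

theory Submission
  imports Defs
begin

(* For \<delta> > 0, every continuation of the autocratic strategy \<sigma>X after a history of
   positive probability enforces a payoff of its own, independent of Y's play: otherwise Y
   could deviate after that history only and move the total payoff away from 0.  Let
   k \<le> 0 \<le> K be the infimum and supremum of these enforced values.  Each of them is
   decomposable: against every pure reply y it equals (1 - \<delta>) \<phi>(\<tau>, y) + \<delta> c for the
   current mixed action \<tau> and some continuation value c in [k, K].  Decomposable values form
   a closed set (the simplex is compact), so K and k are decomposable too, by mixed actions
   \<tau>p and \<tau>m, and by linearity k + p (K - k) is decomposable by the mixture of weight p.
   The reactive strategy whose state is this weight, moved after each reply to the weight
   of the continuation value, therefore enforces k + p (K - k); started at the weight of 0
   it is autocratic.  If k = K (as happens for \<delta> = 0), then \<sigma>X [] makes \<phi> vanish against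
   every reply, and repeating it forever is autocratic. *)

section \<open>Continuations and the first-round recursion of the payoff\<close>

definition continuation ::
  "('x, 'y, 'a) behav_strategy \<Rightarrow> 'x \<times> 'y \<Rightarrow> ('x, 'y, 'a) behav_strategy" where
  "continuation \<sigma> xy h = \<sigma> (xy # h)"

lemma continuation_const [simp]: "continuation (\<lambda>_. \<tau>) xy = (\<lambda>_. \<tau>)"
  by (rule ext) (simp add: continuation_def)

lemma reactive_strategy_Nil [simp]: "reactive_strategy \<sigma>0 \<sigma>s [] = \<sigma>0"
  by (simp add: reactive_strategy_def)

lemma continuation_reactive_strategy:
  "continuation (reactive_strategy \<sigma>0 \<sigma>s) (x, y) = reactive_strategy (\<sigma>s \<sigma>0 y) \<sigma>s"
  by (rule ext) (simp add: reactive_strategy_def continuation_def)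

lemma hist_pmf_Suc_continuation:
  "hist_pmf \<sigma>X \<sigma>Y (Suc t) =
     bind_pmf (\<sigma>X []) (\<lambda>x. bind_pmf (\<sigma>Y []) (\<lambda>y.
       map_pmf ((#) (x, y)) (hist_pmf (continuation \<sigma>X (x, y)) (continuation \<sigma>Y (x, y)) t)))"
proof (induction t)
  case 0
  show ?case by (simp add: bind_return_pmf)
next
  case (Suc t)
  show ?case
    by (subst hist_pmf.simps(2), subst Suc)
       (simp add: bind_assoc_pmf bind_return_pmf map_pmf_def continuation_def)
qed

lemma payoff_bounded:
  fixes \<phi> :: "'x::finite \<Rightarrow> 'y::finite \<Rightarrow> real"
  obtains C where "\<And>x y. \<bar>\<phi> x y\<bar> \<le> C"
proof
  show "\<bar>\<phi> x y\<bar> \<le> Max (range (\<lambda>(x, y). \<bar>\<phi> x y\<bar>))" for x y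
    by (rule Max_ge) (auto intro: image_eqI[of _ _ "(x, y)"])
qed

lemma abs_expectation_pmf_le:
  fixes f :: "'a \<Rightarrow> real"
  assumes "\<And>z. \<bar>f z\<bar> \<le> C"
  shows "\<bar>measure_pmf.expectation M f\<bar> \<le> C"
proof -
  have "integrable M f"
    by (rule measure_pmf.integrable_const_bound[where B = C]) (use assms in auto)
  then have "measure_pmf.expectation M (\<lambda>z. \<bar>f z\<bar>) \<le> C"
    by (intro measure_pmf.integral_le_const) (use assms in auto)
  then show ?thesis
    using integral_abs_bound[of M f] by linarith
qed

lemma expectation_bind_pmf:
  fixes f :: "'b \<Rightarrow> real"
  assumes "\<And>z. \<bar>f z\<bar> \<le> C"
  shows "measure_pmf.expectation (bind_pmf M N) f =
    measure_pmf.expectation M (\<lambda>x. measure_pmf.expectation (N x) f)"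
  unfolding measure_pmf_bind
  by (rule integral_bind[where K = "count_space UNIV" and B = C and B' = 1])
     (use assms in \<open>auto simp: measure_pmf_in_subprob_algebra\<close>)

lemma expectation_bind_bind_pmf:
  fixes f :: "'c \<Rightarrow> real" and P :: "'x::finite pmf" and Q :: "'y::finite pmf"
  assumes "\<And>z. \<bar>f z\<bar> \<le> C"
  shows "measure_pmf.expectation (bind_pmf P (\<lambda>x. bind_pmf Q (F x))) f =
    (\<Sum>x\<in>UNIV. \<Sum>y\<in>UNIV. pmf P x * pmf Q y * measure_pmf.expectation (F x y) f)"
  by (simp add: expectation_bind_pmf[OF assms] integral_measure_pmf_real[of UNIV]
      sum_distrib_left sum_distrib_right mult_ac)

lemma stage_payoff_0:
  fixes \<phi> :: "'x::finite \<Rightarrow> 'y::finite \<Rightarrow> real"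
  shows "stage_payoff \<phi> \<sigma>X \<sigma>Y 0 =
    (\<Sum>x\<in>UNIV. \<Sum>y\<in>UNIV. pmf (\<sigma>X []) x * pmf (\<sigma>Y []) y * \<phi> x y)"
proof -
  obtain C where C: "\<And>x y. \<bar>\<phi> x y\<bar> \<le> C" using payoff_bounded[of \<phi>] by blast
  have "stage_payoff \<phi> \<sigma>X \<sigma>Y 0 = measure_pmf.expectation
      (bind_pmf (\<sigma>X []) (\<lambda>x. bind_pmf (\<sigma>Y []) (\<lambda>y. return_pmf [(x, y)])))
      (\<lambda>h. case_prod \<phi> (last h))"
    by (simp add: stage_payoff_def bind_return_pmf)
  also have "\<dots> = (\<Sum>x\<in>UNIV. \<Sum>y\<in>UNIV. pmf (\<sigma>X []) x * pmf (\<sigma>Y []) y * \<phi> x y)"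
    by (subst expectation_bind_bind_pmf[where C = C]) (auto simp: C split: prod.splits)
  finally show ?thesis .
qed

lemma stage_payoff_Suc:
  fixes \<phi> :: "'x::finite \<Rightarrow> 'y::finite \<Rightarrow> real"
  shows "stage_payoff \<phi> \<sigma>X \<sigma>Y (Suc t) =
    (\<Sum>x\<in>UNIV. \<Sum>y\<in>UNIV. pmf (\<sigma>X []) x * pmf (\<sigma>Y []) y *
       stage_payoff \<phi> (continuation \<sigma>X (x, y)) (continuation \<sigma>Y (x, y)) t)"
proof -
  obtain C where C: "\<And>x y. \<bar>\<phi> x y\<bar> \<le> C" using payoff_bounded[of \<phi>] by blast
  have shifted: "measure_pmf.expectation (map_pmf ((#) xy) (hist_pmf \<sigma>X' \<sigma>Y' (Suc t)))
      (\<lambda>h. case_prod \<phi> (last h)) = stage_payoff \<phi> \<sigma>X' \<sigma>Y' t" for xy \<sigma>X' \<sigma>Y'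
    unfolding stage_payoff_def integral_map_pmf
    by (rule integral_cong_AE) (auto simp: AE_measure_pmf_iff)
  have "stage_payoff \<phi> \<sigma>X \<sigma>Y (Suc t) =
    (\<Sum>x\<in>UNIV. \<Sum>y\<in>UNIV. pmf (\<sigma>X []) x * pmf (\<sigma>Y []) y *
       measure_pmf.expectation
         (map_pmf ((#) (x, y)) (hist_pmf (continuation \<sigma>X (x, y)) (continuation \<sigma>Y (x, y)) (Suc t)))
         (\<lambda>h. case_prod \<phi> (last h)))"
    unfolding stage_payoff_def
    by (subst hist_pmf_Suc_continuation, rule expectation_bind_bind_pmf[where C = C])
       (simp add: C split: prod.splits)
  then show ?thesis
    by (simp only: shifted)
qed

lemma abs_stage_payoff_le:
  assumes "\<And>x y. \<bar>\<phi> x y\<bar> \<le> C"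
  shows "\<bar>stage_payoff \<phi> \<sigma>X \<sigma>Y t\<bar> \<le> C"
  unfolding stage_payoff_def
  by (rule abs_expectation_pmf_le) (simp add: assms split: prod.splits)

lemma discounted_sum_bounded:
  fixes s :: "nat \<Rightarrow> real"
  assumes "0 \<le> \<delta>" "\<delta> < 1" "\<And>t. \<bar>s t\<bar> \<le> C"
  shows "summable (\<lambda>t. \<delta> ^ t * s t)" "\<bar>(1 - \<delta>) * (\<Sum>t. \<delta> ^ t * s t)\<bar> \<le> C"
proof -
  have geometric: "summable (\<lambda>t. C * \<delta> ^ t)"
    using assms by (intro summable_mult summable_geometric) auto
  have dominated: "\<bar>\<delta> ^ t * s t\<bar> \<le> C * \<delta> ^ t" for t
    using assms by (simp add: abs_mult mult.commute mult_right_mono)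
  show "summable (\<lambda>t. \<delta> ^ t * s t)"
    by (rule summable_comparison_test[OF _ geometric]) (use dominated in auto)
  have "\<bar>\<Sum>t. \<delta> ^ t * s t\<bar> \<le> (\<Sum>t. C * \<delta> ^ t)"
    using norm_suminf_le[of "\<lambda>t. \<delta> ^ t * s t", OF _ geometric] dominated by simp
  also have "\<dots> = C / (1 - \<delta>)"
    using assms by (simp add: suminf_mult suminf_geometric)
  finally show "\<bar>(1 - \<delta>) * (\<Sum>t. \<delta> ^ t * s t)\<bar> \<le> C"
    using assms by (simp add: abs_mult pos_le_divide_eq mult.commute)
qed

lemma abs_discounted_payoff_le:
  assumes "0 \<le> \<delta>" "\<delta> < 1" "\<And>x y. \<bar>\<phi> x y\<bar> \<le> C"
  shows "\<bar>discounted_payoff \<phi> \<delta> \<sigma>X \<sigma>Y\<bar> \<le> C"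
  unfolding discounted_payoff_def
  by (rule discounted_sum_bounded(2)[OF assms(1,2) abs_stage_payoff_le[OF assms(3)]])

lemma discounted_payoff_first_round:
  fixes \<phi> :: "'x::finite \<Rightarrow> 'y::finite \<Rightarrow> real"
  assumes "0 \<le> \<delta>" "\<delta> < 1"
  shows "discounted_payoff \<phi> \<delta> \<sigma>X \<sigma>Y =
    (\<Sum>x\<in>UNIV. \<Sum>y\<in>UNIV. pmf (\<sigma>X []) x * pmf (\<sigma>Y []) y *
       ((1 - \<delta>) * \<phi> x y +
        \<delta> * discounted_payoff \<phi> \<delta> (continuation \<sigma>X (x, y)) (continuation \<sigma>Y (x, y))))"
proof -
  obtain C where C: "\<And>x y. \<bar>\<phi> x y\<bar> \<le> C" using payoff_bounded[of \<phi>] by blast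
  have summable: "summable (\<lambda>t. \<delta> ^ t * stage_payoff \<phi> \<sigma>X' \<sigma>Y' t)" for \<sigma>X' \<sigma>Y'
    by (rule discounted_sum_bounded(1)[OF assms abs_stage_payoff_le[OF C]])
  define c where "c x y = pmf (\<sigma>X []) x * pmf (\<sigma>Y []) y" for x y
  define s where "s x y = stage_payoff \<phi> (continuation \<sigma>X (x, y)) (continuation \<sigma>Y (x, y))" for x y
  have "(\<Sum>t. \<delta> ^ t * stage_payoff \<phi> \<sigma>X \<sigma>Y t) =
      stage_payoff \<phi> \<sigma>X \<sigma>Y 0 + (\<Sum>t. \<delta> * (\<delta> ^ t * stage_payoff \<phi> \<sigma>X \<sigma>Y (Suc t)))"
    using suminf_split_head[OF summable] by (simp add: mult.assoc)
  also have "(\<Sum>t. \<delta> * (\<delta> ^ t * stage_payoff \<phi> \<sigma>X \<sigma>Y (Suc t))) =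
      (\<Sum>t. \<Sum>x\<in>UNIV. \<Sum>y\<in>UNIV. c x y * (\<delta> * (\<delta> ^ t * s x y t)))"
    by (simp add: stage_payoff_Suc c_def s_def sum_distrib_left mult_ac)
  also have "\<dots> = (\<Sum>x\<in>UNIV. \<Sum>y\<in>UNIV. c x y * (\<delta> * (\<Sum>t. \<delta> ^ t * s x y t)))"
    by (simp add: suminf_sum suminf_mult summable summable_sum summable_mult s_def)
  finally have "discounted_payoff \<phi> \<delta> \<sigma>X \<sigma>Y =
      (1 - \<delta>) * (\<Sum>x\<in>UNIV. \<Sum>y\<in>UNIV. c x y * \<phi> x y) +
      (1 - \<delta>) * (\<Sum>x\<in>UNIV. \<Sum>y\<in>UNIV. c x y * (\<delta> * (\<Sum>t. \<delta> ^ t * s x y t)))"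
    unfolding discounted_payoff_def stage_payoff_0 c_def by (simp add: distrib_left)
  then show ?thesis
    unfolding discounted_payoff_def sum_distrib_left sum.distrib[symmetric] s_def c_def
    by (simp add: algebra_simps)
qed

lemma discounted_payoff_pure_first_round:
  fixes \<phi> :: "'x::finite \<Rightarrow> 'y::finite \<Rightarrow> real"
  assumes "0 \<le> \<delta>" "\<delta> < 1" "\<sigma>Y [] = return_pmf y"
  shows "discounted_payoff \<phi> \<delta> \<sigma>X \<sigma>Y =
    (\<Sum>x\<in>UNIV. pmf (\<sigma>X []) x *
       ((1 - \<delta>) * \<phi> x y +
        \<delta> * discounted_payoff \<phi> \<delta> (continuation \<sigma>X (x, y)) (continuation \<sigma>Y (x, y))))"
proof -
  have point_mass: "(\<Sum>y'\<in>UNIV. pmf (return_pmf y) y' * g y') = g y" for g :: "'y \<Rightarrow> real"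
    by (simp add: pmf_return indicator_def)
  show ?thesis
    by (subst discounted_payoff_first_round[OF assms(1,2)])
       (simp only: assms(3) mult.assoc sum_distrib_left[symmetric] point_mass)
qed

section \<open>Mixed actions\<close>

lemma pmf_weighted_sum_le:
  fixes P :: "'a::finite pmf"
  assumes "\<And>x. x \<in> set_pmf P \<Longrightarrow> f x \<le> c"
  shows "(\<Sum>x\<in>UNIV. pmf P x * f x) \<le> c"
proof -
  have "(\<Sum>x\<in>UNIV. pmf P x * f x) \<le> (\<Sum>x\<in>UNIV. pmf P x * c)"
    using assms by (intro sum_mono) (metis mult_left_mono mult_zero_left order_refl pmf_nonneg set_pmf_iff)
  also have "\<dots> = c"
    by (simp add: sum_distrib_right[symmetric] sum_pmf_eq_1)
  finally show ?thesis .
qed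

lemma pmf_weighted_sum_ge:
  fixes P :: "'a::finite pmf"
  assumes "\<And>x. x \<in> set_pmf P \<Longrightarrow> c \<le> f x"
  shows "c \<le> (\<Sum>x\<in>UNIV. pmf P x * f x)"
  using pmf_weighted_sum_le[of P "\<lambda>x. - f x" "- c"] assms by (simp add: sum_negf)

lemma abs_pmf_weighted_sum_le:
  fixes P :: "'a::finite pmf"
  assumes "\<And>x. \<bar>f x\<bar> \<le> c"
  shows "\<bar>\<Sum>x\<in>UNIV. pmf P x * f x\<bar> \<le> c"
proof -
  have "(\<Sum>x\<in>UNIV. pmf P x * f x) \<le> c" "- c \<le> (\<Sum>x\<in>UNIV. pmf P x * f x)"
    using assms abs_le_iff[of "f _" c]
    by (auto intro!: pmf_weighted_sum_le pmf_weighted_sum_ge simp: minus_le_iff)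
  then show ?thesis by linarith
qed

lemma abs_pmf_weighted_sum2_le:
  fixes P :: "'a::finite pmf" and Q :: "'b::finite pmf"
  assumes "\<And>x y. \<bar>f x y\<bar> \<le> c"
  shows "\<bar>\<Sum>x\<in>UNIV. \<Sum>y\<in>UNIV. pmf P x * pmf Q y * f x y\<bar> \<le> c"
  using abs_pmf_weighted_sum_le[of "\<lambda>x. \<Sum>y\<in>UNIV. pmf Q y * f x y" c P]
    abs_pmf_weighted_sum_le[of "f _" c Q] assms
  by (simp add: sum_distrib_left mult.assoc)

definition mixed_payoff :: "('x::finite \<Rightarrow> 'y \<Rightarrow> real) \<Rightarrow> 'x pmf \<Rightarrow> 'y \<Rightarrow> real" where
  "mixed_payoff \<phi> \<tau> y = (\<Sum>x\<in>UNIV. pmf \<tau> x * \<phi> x y)"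

lemma sum_pmf_pmf_mixed_payoff:
  fixes \<phi> :: "'x::finite \<Rightarrow> 'y::finite \<Rightarrow> real"
  shows "(\<Sum>x\<in>UNIV. \<Sum>y\<in>UNIV. pmf P x * pmf Q y * (a * \<phi> x y + g y)) =
    (\<Sum>y\<in>UNIV. pmf Q y * (a * mixed_payoff \<phi> P y + g y))"
proof -
  have inner: "(\<Sum>x\<in>UNIV. pmf P x * (a * \<phi> x y + g y)) = a * mixed_payoff \<phi> P y + g y" for y
  proof -
    have "(\<Sum>x\<in>UNIV. pmf P x * (a * \<phi> x y + g y)) =
        a * (\<Sum>x\<in>UNIV. pmf P x * \<phi> x y) + g y * (\<Sum>x\<in>UNIV. pmf P x)"
      by (simp add: sum.distrib sum_distrib_left algebra_simps)
    then show ?thesis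
      by (simp add: mixed_payoff_def sum_pmf_eq_1)
  qed
  show ?thesis
    by (subst sum.swap) (simp add: sum_distrib_left mult_ac flip: inner)
qed

lemma pmf_mix:
  assumes "p \<in> {0..1}"
  shows "pmf (mix p \<tau>1 \<tau>2) x = p * pmf \<tau>1 x + (1 - p) * pmf \<tau>2 x"
  using assms by (simp add: mix_def pmf_bind mult.commute)

lemma mixed_payoff_mix:
  fixes \<phi> :: "'x::finite \<Rightarrow> 'y \<Rightarrow> real"
  assumes "p \<in> {0..1}"
  shows "mixed_payoff \<phi> (mix p \<tau>1 \<tau>2) y = p * mixed_payoff \<phi> \<tau>1 y + (1 - p) * mixed_payoff \<phi> \<tau>2 y"
proof -
  have "mixed_payoff \<phi> (mix p \<tau>1 \<tau>2) y =
      (\<Sum>x\<in>UNIV. p * (pmf \<tau>1 x * \<phi> x y) + (1 - p) * (pmf \<tau>2 x * \<phi> x y))"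
    unfolding mixed_payoff_def by (intro sum.cong) (simp_all add: pmf_mix[OF assms] algebra_simps)
  then show ?thesis
    by (simp add: mixed_payoff_def sum.distrib sum_distrib_left)
qed

lemma inj_on_mix:
  assumes "\<tau>1 \<noteq> \<tau>2"
  shows "inj_on (\<lambda>p. mix p \<tau>1 \<tau>2) {0..1}"
proof (rule inj_onI)
  fix p q
  assume p: "p \<in> {0..1}" and q: "q \<in> {0..1}" and "mix p \<tau>1 \<tau>2 = mix q \<tau>1 \<tau>2"
  obtain x where x: "pmf \<tau>1 x \<noteq> pmf \<tau>2 x"
    using assms pmf_eqI by metis
  have "p * pmf \<tau>1 x + (1 - p) * pmf \<tau>2 x = q * pmf \<tau>1 x + (1 - q) * pmf \<tau>2 x"
    using \<open>mix p \<tau>1 \<tau>2 = mix q \<tau>1 \<tau>2\<close> by (simp only: pmf_mix[OF p, symmetric] pmf_mix[OF q, symmetric])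
  then have "(p - q) * (pmf \<tau>1 x - pmf \<tau>2 x) = 0"
    by (simp add: algebra_simps)
  with x show "p = q"
    by simp
qed

lemma pmf_convergent_subseq:
  fixes \<tau> :: "nat \<Rightarrow> 'a::finite pmf"
  obtains r \<tau>0 where "strict_mono r" "\<And>x. (\<lambda>n. pmf (\<tau> (r n)) x) \<longlonglongrightarrow> pmf \<tau>0 x"
proof -
  define v where "v n = (\<chi> x. pmf (\<tau> n) x)" for n
  have "v n \<in> cbox 0 (\<chi> x. 1)" for n
    by (auto simp: v_def mem_box_cart pmf_le_1)
  then obtain l r where l: "l \<in> cbox 0 (\<chi> x. 1)" and r: "strict_mono r" and lim: "(v \<circ> r) \<longlonglongrightarrow> l"
    using compact_imp_seq_compact[OF compact_cbox] unfolding seq_compact_def by metis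
  have coordinates: "(\<lambda>n. pmf (\<tau> (r n)) x) \<longlonglongrightarrow> l $ x" for x
    using tendsto_vec_nth[OF lim, of x] by (simp add: v_def o_def)
  have "(\<lambda>n. \<Sum>x\<in>UNIV. pmf (\<tau> (r n)) x) \<longlonglongrightarrow> (\<Sum>x\<in>UNIV. l $ x)"
    by (intro tendsto_sum coordinates)
  then have "(\<Sum>x\<in>UNIV. l $ x) = 1"
    by (simp add: sum_pmf_eq_1 LIMSEQ_const_iff)
  moreover have "0 \<le> l $ x" for x
    using l by (auto simp: mem_box_cart)
  ultimately have "pmf (embed_pmf (\<lambda>x. l $ x)) x = l $ x" for x
    by (intro pmf_embed_pmf) (auto simp: nn_integral_count_space_finite)
  with r coordinates show thesis
    by (intro that[of r "embed_pmf (\<lambda>x. l $ x)"]) auto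
qed

section \<open>Reactive strategies driven by a value function\<close>

definition enforces ::
  "('x \<Rightarrow> 'y \<Rightarrow> real) \<Rightarrow> real \<Rightarrow> ('x, 'y, 'x) behav_strategy \<Rightarrow> real \<Rightarrow> bool" where
  "enforces \<phi> \<delta> \<sigma>X u \<longleftrightarrow> (\<forall>\<sigma>Y :: ('x, 'y, 'y) behav_strategy. discounted_payoff \<phi> \<delta> \<sigma>X \<sigma>Y = u)"

lemma autocratic_iff_enforces_0: "autocratic \<phi> \<delta> \<sigma>X \<longleftrightarrow> enforces \<phi> \<delta> \<sigma>X 0"
  by (simp add: autocratic_def enforces_def)

lemma reactive_strategy_enforces_value:
  fixes \<phi> :: "'x::finite \<Rightarrow> 'y::finite \<Rightarrow> real" and v :: "'x pmf \<Rightarrow> real"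
  assumes "0 \<le> \<delta>" "\<delta> < 1"
    and closed: "\<And>\<tau> y. \<tau> \<in> A \<Longrightarrow> \<sigma>s \<tau> y \<in> A"
    and bounded: "\<And>\<tau>. \<tau> \<in> A \<Longrightarrow> \<bar>v \<tau>\<bar> \<le> B"
    and bellman: "\<And>\<tau> y. \<tau> \<in> A \<Longrightarrow> v \<tau> = (1 - \<delta>) * mixed_payoff \<phi> \<tau> y + \<delta> * v (\<sigma>s \<tau> y)"
    and "\<tau> \<in> A"
  shows "enforces \<phi> \<delta> (reactive_strategy \<tau> \<sigma>s) (v \<tau>)"
proof -
  obtain C where C: "\<And>x y. \<bar>\<phi> x y\<bar> \<le> C" using payoff_bounded[of \<phi>] by blast
  \<comment> \<open>Each round unfolded by the Bellman equation shrinks the error by the factor \<delta>.\<close>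
  have "\<bar>discounted_payoff \<phi> \<delta> (reactive_strategy \<tau> \<sigma>s) \<sigma>Y - v \<tau>\<bar> \<le> \<delta> ^ n * (C + B)"
    if "\<tau> \<in> A" for n \<tau> \<sigma>Y
    using that
  proof (induction n arbitrary: \<tau> \<sigma>Y)
    case 0
    have "\<bar>discounted_payoff \<phi> \<delta> (reactive_strategy \<tau> \<sigma>s) \<sigma>Y\<bar> \<le> C"
      by (rule abs_discounted_payoff_le[OF assms(1,2) C])
    then show ?case
      using bounded[OF 0] by simp
  next
    case (Suc n)
    define D where "D x y =
      discounted_payoff \<phi> \<delta> (reactive_strategy (\<sigma>s \<tau> y) \<sigma>s) (continuation \<sigma>Y (x, y))" for x y
    have "discounted_payoff \<phi> \<delta> (reactive_strategy \<tau> \<sigma>s) \<sigma>Y =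
        (\<Sum>x\<in>UNIV. \<Sum>y\<in>UNIV. pmf \<tau> x * pmf (\<sigma>Y []) y * ((1 - \<delta>) * \<phi> x y + \<delta> * D x y))"
      by (subst discounted_payoff_first_round[OF assms(1,2)])
         (simp add: continuation_reactive_strategy D_def)
    moreover have "v \<tau> =
        (\<Sum>x\<in>UNIV. \<Sum>y\<in>UNIV. pmf \<tau> x * pmf (\<sigma>Y []) y * ((1 - \<delta>) * \<phi> x y + \<delta> * v (\<sigma>s \<tau> y)))"
      by (simp add: sum_pmf_pmf_mixed_payoff bellman[OF Suc.prems, symmetric]
          flip: sum_distrib_right) (simp add: sum_pmf_eq_1)
    ultimately have "discounted_payoff \<phi> \<delta> (reactive_strategy \<tau> \<sigma>s) \<sigma>Y - v \<tau> =
        (\<Sum>x\<in>UNIV. \<Sum>y\<in>UNIV. pmf \<tau> x * pmf (\<sigma>Y []) y * (\<delta> * (D x y - v (\<sigma>s \<tau> y))))"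
      by (simp add: algebra_simps flip: sum_subtractf)
    also have "\<bar>\<dots>\<bar> \<le> \<delta> * (\<delta> ^ n * (C + B))"
      using Suc.IH[OF closed[OF Suc.prems]] assms(1)
      by (intro abs_pmf_weighted_sum2_le) (simp add: D_def abs_mult mult_left_mono)
    finally show ?case by simp
  qed
  moreover have "(\<lambda>n. \<delta> ^ n * (C + B)) \<longlonglongrightarrow> 0"
    using assms(1,2) by (intro tendsto_mult_left_zero LIMSEQ_power_zero) auto
  ultimately have "\<bar>discounted_payoff \<phi> \<delta> (reactive_strategy \<tau> \<sigma>s) \<sigma>Y - v \<tau>\<bar> \<le> 0" for \<sigma>Y
    using \<open>\<tau> \<in> A\<close> by (intro LIMSEQ_le_const[of _ 0]) auto
  then show ?thesis
    unfolding enforces_def by simp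
qed

lemma two_point_constant: "two_point \<tau> (\<lambda>_ _. \<tau>)"
  unfolding two_point_def
  by (intro exI[of _ \<tau>] exI[of _ 0] exI[of _ "\<lambda>_ _. 0"]) (simp add: mix_def)

lemma autocratic_constant_reactive:
  fixes \<phi> :: "'x::finite \<Rightarrow> 'y::finite \<Rightarrow> real"
  assumes "0 \<le> \<delta>" "\<delta> < 1" "\<And>y. mixed_payoff \<phi> \<tau> y = 0"
  shows "autocratic \<phi> \<delta> (reactive_strategy \<tau> (\<lambda>_ _. \<tau>))"
  unfolding autocratic_iff_enforces_0
  by (rule reactive_strategy_enforces_value[where A = "{\<tau>}" and v = "\<lambda>_. 0" and B = 0, simplified])
     (simp_all add: assms)

section \<open>Decomposable values\<close>

(* Self-generation in the sense of Abreu, Pearce and Stacchetti, with continuation values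
   confined to [k, K]. *)
definition decomposable ::
  "('x::finite \<Rightarrow> 'y \<Rightarrow> real) \<Rightarrow> real \<Rightarrow> real \<Rightarrow> real \<Rightarrow> real \<Rightarrow> 'x pmf \<Rightarrow> bool" where
  "decomposable \<phi> \<delta> k K u \<tau> \<longleftrightarrow>
     (\<forall>y. \<exists>c\<in>{k..K}. u = (1 - \<delta>) * mixed_payoff \<phi> \<tau> y + \<delta> * c)"

lemma decomposable_iff:
  assumes "0 \<le> \<delta>" "k \<le> K"
  shows "decomposable \<phi> \<delta> k K u \<tau> \<longleftrightarrow>
    (\<forall>y. \<delta> * k \<le> u - (1 - \<delta>) * mixed_payoff \<phi> \<tau> y \<and> u - (1 - \<delta>) * mixed_payoff \<phi> \<tau> y \<le> \<delta> * K)"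
proof -
  have "(\<exists>c\<in>{k..K}. u = m + \<delta> * c) \<longleftrightarrow> \<delta> * k \<le> u - m \<and> u - m \<le> \<delta> * K" for m
  proof (cases "\<delta> = 0")
    case True
    then show ?thesis using assms by auto
  next
    case False
    with assms have "0 < \<delta>" by simp
    show ?thesis
    proof
      assume "\<exists>c\<in>{k..K}. u = m + \<delta> * c"
      then show "\<delta> * k \<le> u - m \<and> u - m \<le> \<delta> * K"
        using assms by (auto intro: mult_left_mono)
    next
      assume "\<delta> * k \<le> u - m \<and> u - m \<le> \<delta> * K"
      then have "(u - m) / \<delta> \<in> {k..K} \<and> u = m + \<delta> * ((u - m) / \<delta>)"
        using \<open>0 < \<delta>\<close> by (simp add: pos_le_divide_eq pos_divide_le_eq mult.commute)
      then show "\<exists>c\<in>{k..K}. u = m + \<delta> * c" by blast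
    qed
  qed
  then show ?thesis
    unfolding decomposable_def by blast
qed

lemma decomposable_mix:
  assumes "decomposable \<phi> \<delta> k K u1 \<tau>1" "decomposable \<phi> \<delta> k K u2 \<tau>2" "p \<in> {0..1}"
  shows "decomposable \<phi> \<delta> k K (p * u1 + (1 - p) * u2) (mix p \<tau>1 \<tau>2)"
  unfolding decomposable_def
proof
  fix y
  obtain c1 c2 where c: "c1 \<in> {k..K}" "u1 = (1 - \<delta>) * mixed_payoff \<phi> \<tau>1 y + \<delta> * c1"
      "c2 \<in> {k..K}" "u2 = (1 - \<delta>) * mixed_payoff \<phi> \<tau>2 y + \<delta> * c2"
    using assms(1,2) unfolding decomposable_def by blast
  have "p * k \<le> p * c1" "p * c1 \<le> p * K" "(1 - p) * k \<le> (1 - p) * c2" "(1 - p) * c2 \<le> (1 - p) * K"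
    using c(1,3) assms(3) by (auto intro: mult_left_mono)
  moreover have "p * k + (1 - p) * k = k" "p * K + (1 - p) * K = K"
    by (simp_all add: algebra_simps)
  ultimately have "p * c1 + (1 - p) * c2 \<in> {k..K}"
    by simp
  moreover have "p * u1 + (1 - p) * u2 =
      (1 - \<delta>) * mixed_payoff \<phi> (mix p \<tau>1 \<tau>2) y + \<delta> * (p * c1 + (1 - p) * c2)"
    by (simp add: c(2,4) mixed_payoff_mix[OF assms(3)] algebra_simps)
  ultimately show "\<exists>c\<in>{k..K}. p * u1 + (1 - p) * u2 = (1 - \<delta>) * mixed_payoff \<phi> (mix p \<tau>1 \<tau>2) y + \<delta> * c" ..
qed

lemma decomposable_extreme_values:
  assumes "0 \<le> \<delta>" "\<delta> < 1"
  shows decomposable_top_le: "decomposable \<phi> \<delta> k K K \<tau> \<Longrightarrow> K \<le> mixed_payoff \<phi> \<tau> y"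
    and decomposable_bottom_ge: "decomposable \<phi> \<delta> k K k \<tau> \<Longrightarrow> mixed_payoff \<phi> \<tau> y \<le> k"
proof -
  assume "decomposable \<phi> \<delta> k K K \<tau>"
  then obtain c where "c \<in> {k..K}" "K = (1 - \<delta>) * mixed_payoff \<phi> \<tau> y + \<delta> * c"
    unfolding decomposable_def by blast
  then have "(1 - \<delta>) * K \<le> (1 - \<delta>) * mixed_payoff \<phi> \<tau> y"
    using mult_left_mono[of c K \<delta>] assms(1) by (auto simp: algebra_simps)
  with assms(2) show "K \<le> mixed_payoff \<phi> \<tau> y"
    by simp
next
  assume "decomposable \<phi> \<delta> k K k \<tau>"
  then obtain c where "c \<in> {k..K}" "k = (1 - \<delta>) * mixed_payoff \<phi> \<tau> y + \<delta> * c"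
    unfolding decomposable_def by blast
  then have "(1 - \<delta>) * mixed_payoff \<phi> \<tau> y \<le> (1 - \<delta>) * k"
    using mult_left_mono[of k c \<delta>] assms(1) by (auto simp: algebra_simps)
  with assms(2) show "mixed_payoff \<phi> \<tau> y \<le> k"
    by simp
qed

lemma closed_decomposable_values:
  fixes \<phi> :: "'x::finite \<Rightarrow> 'y \<Rightarrow> real"
  assumes "0 \<le> \<delta>" "k \<le> K"
  shows "closed {u. \<exists>\<tau>. decomposable \<phi> \<delta> k K u \<tau>}"
  unfolding closed_sequential_limits
proof (intro allI impI, elim conjE)
  fix u :: "nat \<Rightarrow> real" and u0
  assume "\<forall>n. u n \<in> {u. \<exists>\<tau>. decomposable \<phi> \<delta> k K u \<tau>}" and lim: "u \<longlonglongrightarrow> u0"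
  then have "\<forall>n. \<exists>\<tau>. decomposable \<phi> \<delta> k K (u n) \<tau>"
    by simp
  then obtain \<tau> where dec: "\<And>n. decomposable \<phi> \<delta> k K (u n) (\<tau> n)"
    by metis
  obtain r \<tau>0 where r: "strict_mono r" and conv: "\<And>x. (\<lambda>n. pmf (\<tau> (r n)) x) \<longlonglongrightarrow> pmf \<tau>0 x"
    using pmf_convergent_subseq[of \<tau>] by blast
  have "(\<lambda>n. u (r n)) \<longlonglongrightarrow> u0"
    using LIMSEQ_subseq_LIMSEQ[OF lim r] by (simp add: o_def)
  then have limit: "(\<lambda>n. u (r n) - (1 - \<delta>) * mixed_payoff \<phi> (\<tau> (r n)) y) \<longlonglongrightarrow>
      u0 - (1 - \<delta>) * mixed_payoff \<phi> \<tau>0 y" for y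
    unfolding mixed_payoff_def by (intro tendsto_diff tendsto_mult_left tendsto_sum tendsto_mult_right conv)
  have "decomposable \<phi> \<delta> k K u0 \<tau>0"
    unfolding decomposable_iff[OF assms]
  proof
    fix y
    show "\<delta> * k \<le> u0 - (1 - \<delta>) * mixed_payoff \<phi> \<tau>0 y \<and> u0 - (1 - \<delta>) * mixed_payoff \<phi> \<tau>0 y \<le> \<delta> * K"
      using dec[of "r _"] unfolding decomposable_iff[OF assms]
      by (intro conjI LIMSEQ_le_const[OF limit] LIMSEQ_le_const2[OF limit]) auto
  qed
  then show "u0 \<in> {u. \<exists>\<tau>. decomposable \<phi> \<delta> k K u \<tau>}"
    by blast
qed

lemma decomposable_segment:
  assumes "k < K"
    and plus: "decomposable \<phi> \<delta> k K K \<tau>p" and minus: "decomposable \<phi> \<delta> k K k \<tau>m"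
  obtains pstar where "\<And>p y. p \<in> {0..1} \<Longrightarrow> pstar p y \<in> {0..1}"
    "\<And>p y. p \<in> {0..1} \<Longrightarrow> k + p * (K - k) =
      (1 - \<delta>) * mixed_payoff \<phi> (mix p \<tau>p \<tau>m) y + \<delta> * (k + pstar p y * (K - k))"
proof -
  have "decomposable \<phi> \<delta> k K (k + p * (K - k)) (mix p \<tau>p \<tau>m)" if "p \<in> {0..1}" for p
    using decomposable_mix[OF plus minus that] by (simp add: algebra_simps)
  then obtain c where c: "\<And>p y. p \<in> {0..1} \<Longrightarrow> c p y \<in> {k..K}"
    "\<And>p y. p \<in> {0..1} \<Longrightarrow>
      k + p * (K - k) = (1 - \<delta>) * mixed_payoff \<phi> (mix p \<tau>p \<tau>m) y + \<delta> * c p y"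
    unfolding decomposable_def by metis
  show thesis
  proof (rule that[of "\<lambda>p y. (c p y - k) / (K - k)"])
    show "(c p y - k) / (K - k) \<in> {0..1}" if "p \<in> {0..1}" for p y
      using c(1)[OF that, of y] assms(1) by (simp add: divide_le_eq_1)
    show "k + p * (K - k) =
        (1 - \<delta>) * mixed_payoff \<phi> (mix p \<tau>p \<tau>m) y + \<delta> * (k + (c p y - k) / (K - k) * (K - k))"
      if "p \<in> {0..1}" for p y
      using c(2)[OF that, of y] assms(1) by simp
  qed
qed

lemma two_point_reactive_value:
  fixes \<phi> :: "'x::finite \<Rightarrow> 'y::finite \<Rightarrow> real"
  assumes "0 \<le> \<delta>" "\<delta> < 1" "\<tau>p \<noteq> \<tau>m"
    and pstar: "\<And>p y. p \<in> {0..1} \<Longrightarrow> pstar p y \<in> {0..1}"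
    and bellman: "\<And>p y. p \<in> {0..1} \<Longrightarrow>
      w p = (1 - \<delta>) * mixed_payoff \<phi> (mix p \<tau>p \<tau>m) y + \<delta> * w (pstar p y)"
    and bounded: "\<And>p. p \<in> {0..1} \<Longrightarrow> \<bar>w p\<bar> \<le> B"
    and "p0 \<in> {0..1}"
  shows "\<exists>\<sigma>s. two_point (mix p0 \<tau>p \<tau>m) \<sigma>s \<and> enforces \<phi> \<delta> (reactive_strategy (mix p0 \<tau>p \<tau>m) \<sigma>s) (w p0)"
proof -
  let ?A = "(\<lambda>p. mix p \<tau>p \<tau>m) ` {0..1}"
  define sel where "sel = inv_into {0..1} (\<lambda>p. mix p \<tau>p \<tau>m)"
  have sel: "sel (mix p \<tau>p \<tau>m) = p" if "p \<in> {0..1}" for p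
    unfolding sel_def by (rule inv_into_f_f[OF inj_on_mix[OF assms(3)] that])
  define \<sigma>s where "\<sigma>s \<tau> y = mix (pstar (sel \<tau>) y) \<tau>p \<tau>m" for \<tau> y
  have step: "\<sigma>s (mix p \<tau>p \<tau>m) y = mix (pstar p y) \<tau>p \<tau>m" if "p \<in> {0..1}" for p y
    by (simp add: \<sigma>s_def sel[OF that])
  have "two_point (mix p0 \<tau>p \<tau>m) \<sigma>s"
    unfolding two_point_def
    by (rule exI[of _ \<tau>p], rule exI[of _ \<tau>m], rule exI[of _ p0], rule exI[of _ pstar])
       (use assms(7) pstar step in auto)
  moreover have "enforces \<phi> \<delta> (reactive_strategy (mix p0 \<tau>p \<tau>m) \<sigma>s) (w (sel (mix p0 \<tau>p \<tau>m)))"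
  proof (rule reactive_strategy_enforces_value[where A = ?A and v = "\<lambda>\<tau>. w (sel \<tau>)" and B = B])
    fix \<tau> y
    assume "\<tau> \<in> ?A"
    then obtain p where p: "p \<in> {0..1}" and \<tau>: "\<tau> = mix p \<tau>p \<tau>m"
      by blast
    show "\<sigma>s \<tau> y \<in> ?A"
      using pstar[OF p] by (simp add: \<tau> step[OF p])
    show "\<bar>w (sel \<tau>)\<bar> \<le> B"
      using bounded[OF p] by (simp add: \<tau> sel[OF p])
    show "w (sel \<tau>) = (1 - \<delta>) * mixed_payoff \<phi> \<tau> y + \<delta> * w (sel (\<sigma>s \<tau> y))"
      using bellman[OF p, of y] by (simp add: \<tau> sel[OF p] step[OF p] sel[OF pstar[OF p]])
  qed (use assms in simp_all)
  ultimately show ?thesis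
    by (auto simp: sel[OF assms(7)])
qed

lemma two_point_reactive_enforces:
  fixes \<phi> :: "'x::finite \<Rightarrow> 'y::finite \<Rightarrow> real"
  assumes "0 \<le> \<delta>" "\<delta> < 1" "k < K"
    and plus: "decomposable \<phi> \<delta> k K K \<tau>p" and minus: "decomposable \<phi> \<delta> k K k \<tau>m"
    and "p0 \<in> {0..1}"
  shows "\<exists>\<sigma>s. two_point (mix p0 \<tau>p \<tau>m) \<sigma>s \<and>
    enforces \<phi> \<delta> (reactive_strategy (mix p0 \<tau>p \<tau>m) \<sigma>s) (k + p0 * (K - k))"
proof -
  \<comment> \<open>The weight p of \<tau>p promises the value k + p (K - k); after the reply y it moves to the
    weight of the continuation value that decomposes this promise.\<close>
  obtain pstar where pstar: "\<And>p y. p \<in> {0..1} \<Longrightarrow> pstar p y \<in> {0..1}"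
    "\<And>p y. p \<in> {0..1} \<Longrightarrow> k + p * (K - k) =
      (1 - \<delta>) * mixed_payoff \<phi> (mix p \<tau>p \<tau>m) y + \<delta> * (k + pstar p y * (K - k))"
    using decomposable_segment[OF assms(3) plus minus] by blast
  have "\<tau>p \<noteq> \<tau>m"
    using decomposable_top_le[OF assms(1,2) plus] decomposable_bottom_ge[OF assms(1,2) minus] assms(3)
    by (metis not_le order.trans)
  moreover have "\<bar>k + p * (K - k)\<bar> \<le> \<bar>k\<bar> + \<bar>K\<bar>" if "p \<in> {0..1}" for p
  proof -
    have "0 \<le> p * (K - k)" "p * (K - k) \<le> K - k"
      using that assms(3) mult_left_le_one_le[of "K - k" p] by simp_all
    then show ?thesis
      by (auto simp: abs_if)
  qed
  ultimately show ?thesis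
    using two_point_reactive_value[where w = "\<lambda>p. k + p * (K - k)", OF assms(1,2) _ pstar _ assms(6)]
    by blast
qed

section \<open>Continuations of an autocratic strategy\<close>

inductive_set continuations :: "('x, 'y, 'x) behav_strategy \<Rightarrow> ('x, 'y, 'x) behav_strategy set"
  for \<sigma> where
  self: "\<sigma> \<in> continuations \<sigma>"
| step: "s \<in> continuations \<sigma> \<Longrightarrow> x \<in> set_pmf (s []) \<Longrightarrow> continuation s (x, y) \<in> continuations \<sigma>"

lemma enforces_continuation:
  fixes \<phi> :: "'x::finite \<Rightarrow> 'y::finite \<Rightarrow> real"
  assumes "0 < \<delta>" "\<delta> < 1" "enforces \<phi> \<delta> \<sigma> u" "x \<in> set_pmf (\<sigma> [])"
  shows "\<exists>u'. enforces \<phi> \<delta> (continuation \<sigma> (x, y)) u'"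
proof -
  have "discounted_payoff \<phi> \<delta> (continuation \<sigma> (x, y)) \<sigma>2 =
      discounted_payoff \<phi> \<delta> (continuation \<sigma> (x, y)) \<sigma>1" for \<sigma>1 \<sigma>2
  proof -
    \<comment> \<open>Y plays y, then \<sigma>' after the history (x, y) and \<sigma>1 after any other; as (x, y) has
      positive probability and \<delta> > 0, the enforced value u forces \<sigma>' to be irrelevant.\<close>
    define D where "D x' \<sigma>' = discounted_payoff \<phi> \<delta> (continuation \<sigma> (x', y)) \<sigma>'" for x' \<sigma>'
    define Y where "Y \<sigma>' h =
      (case h of [] \<Rightarrow> return_pmf y | xy' # h' \<Rightarrow> (if xy' = (x, y) then \<sigma>' else \<sigma>1) h')" for \<sigma>' h
    have "Y \<sigma>' [] = return_pmf y" "continuation (Y \<sigma>') (x', y) = (if x' = x then \<sigma>' else \<sigma>1)"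
      for \<sigma>' x'
      by (auto simp: Y_def continuation_def)
    then have payoff: "(\<Sum>x'\<in>UNIV. pmf (\<sigma> []) x' *
        ((1 - \<delta>) * \<phi> x' y + \<delta> * D x' (if x' = x then \<sigma>' else \<sigma>1))) = u" for \<sigma>'
      using assms(3) discounted_payoff_pure_first_round[of \<delta> "Y \<sigma>'" y \<phi> \<sigma>] assms(1,2)
      by (simp add: enforces_def D_def)
    have "(\<Sum>x'\<in>UNIV. pmf (\<sigma> []) x' * (\<delta> * (D x' (if x' = x then \<sigma>2 else \<sigma>1) - D x' \<sigma>1))) =
      (\<Sum>x'\<in>UNIV. pmf (\<sigma> []) x' * ((1 - \<delta>) * \<phi> x' y + \<delta> * D x' (if x' = x then \<sigma>2 else \<sigma>1))) -
      (\<Sum>x'\<in>UNIV. pmf (\<sigma> []) x' * ((1 - \<delta>) * \<phi> x' y + \<delta> * D x' (if x' = x then \<sigma>1 else \<sigma>1)))"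
      unfolding sum_subtractf[symmetric] by (rule sum.cong) (simp_all add: algebra_simps)
    then have "0 = (\<Sum>x'\<in>UNIV. pmf (\<sigma> []) x' * (\<delta> * (D x' (if x' = x then \<sigma>2 else \<sigma>1) - D x' \<sigma>1)))"
      by (simp only: payoff diff_self)
    also have "\<dots> = (\<Sum>x'\<in>UNIV. if x' = x then pmf (\<sigma> []) x * (\<delta> * (D x \<sigma>2 - D x \<sigma>1)) else 0)"
      by (intro sum.cong) auto
    finally have "pmf (\<sigma> []) x * (\<delta> * (D x \<sigma>2 - D x \<sigma>1)) = 0"
      by simp
    with assms(1,4) show ?thesis
      by (simp add: D_def set_pmf_iff)
  qed
  then show ?thesis
    unfolding enforces_def by blast
qed

lemma continuations_enforce:
  fixes \<phi> :: "'x::finite \<Rightarrow> 'y::finite \<Rightarrow> real"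
  assumes "0 < \<delta>" "\<delta> < 1" "autocratic \<phi> \<delta> \<sigma>X" "s \<in> continuations \<sigma>X"
  shows "\<exists>u. enforces \<phi> \<delta> s u"
  using assms(4)
proof induction
  case self
  then show ?case
    using assms(3) by (auto simp: autocratic_iff_enforces_0)
next
  case (step s x y)
  then show ?case
    using enforces_continuation[OF assms(1,2)] by blast
qed

lemma enforces_decomposable:
  fixes \<phi> :: "'x::finite \<Rightarrow> 'y::finite \<Rightarrow> real"
  assumes "0 \<le> \<delta>" "\<delta> < 1" "enforces \<phi> \<delta> s u"
    and continuation_payoffs: "\<And>x y. x \<in> set_pmf (s []) \<Longrightarrow>
      \<exists>u'\<in>{k..K}. enforces \<phi> \<delta> (continuation s (x, y)) u'"
  shows "decomposable \<phi> \<delta> k K u (s [])"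
  unfolding decomposable_def
proof
  fix y
  define c where "c x = discounted_payoff \<phi> \<delta> (continuation s (x, y)) (\<lambda>_. return_pmf y)" for x
  have "u = (\<Sum>x\<in>UNIV. pmf (s []) x * ((1 - \<delta>) * \<phi> x y + \<delta> * c x))"
    using assms(3) discounted_payoff_pure_first_round[OF assms(1,2), of "\<lambda>_. return_pmf y" y \<phi> s]
    by (simp add: enforces_def c_def)
  also have "\<dots> = (1 - \<delta>) * mixed_payoff \<phi> (s []) y + \<delta> * (\<Sum>x\<in>UNIV. pmf (s []) x * c x)"
    unfolding mixed_payoff_def sum_distrib_left sum.distrib[symmetric]
    by (rule sum.cong) (simp_all add: algebra_simps)
  finally have "u = (1 - \<delta>) * mixed_payoff \<phi> (s []) y + \<delta> * (\<Sum>x\<in>UNIV. pmf (s []) x * c x)" .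
  moreover have "c x \<in> {k..K}" if "x \<in> set_pmf (s [])" for x
    using continuation_payoffs[OF that, of y] by (auto simp: c_def enforces_def)
  then have "(\<Sum>x\<in>UNIV. pmf (s []) x * c x) \<in> {k..K}"
    unfolding atLeastAtMost_iff by (blast intro: pmf_weighted_sum_le pmf_weighted_sum_ge)
  ultimately show "\<exists>c\<in>{k..K}. u = (1 - \<delta>) * mixed_payoff \<phi> (s []) y + \<delta> * c"
    by blast
qed

definition continuation_values ::
  "('x \<Rightarrow> 'y \<Rightarrow> real) \<Rightarrow> real \<Rightarrow> ('x, 'y, 'x) behav_strategy \<Rightarrow> real set" where
  "continuation_values \<phi> \<delta> \<sigma>X = {u. \<exists>s\<in>continuations \<sigma>X. enforces \<phi> \<delta> s u}"

lemma bounded_continuation_values: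
  fixes \<phi> :: "'x::finite \<Rightarrow> 'y::finite \<Rightarrow> real"
  assumes "0 \<le> \<delta>" "\<delta> < 1"
  shows "bounded (continuation_values \<phi> \<delta> \<sigma>X)"
proof -
  obtain C where C: "\<And>x y. \<bar>\<phi> x y\<bar> \<le> C"
    using payoff_bounded[of \<phi>] by blast
  have "\<bar>u\<bar> \<le> C" if "u \<in> continuation_values \<phi> \<delta> \<sigma>X" for u
  proof -
    from that obtain s where "\<forall>\<sigma>Y. discounted_payoff \<phi> \<delta> s \<sigma>Y = u"
      by (auto simp: continuation_values_def enforces_def)
    then show ?thesis
      using abs_discounted_payoff_le[where \<phi> = \<phi> and C = C, OF assms C] by metis
  qed
  then show ?thesis
    unfolding bounded_real by blast
qed

lemma continuation_values_decomposable:
  fixes \<phi> :: "'x::finite \<Rightarrow> 'y::finite \<Rightarrow> real"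
  assumes "0 < \<delta>" "\<delta> < 1" "autocratic \<phi> \<delta> \<sigma>X"
    and "s \<in> continuations \<sigma>X" "enforces \<phi> \<delta> s u"
  defines "V \<equiv> continuation_values \<phi> \<delta> \<sigma>X"
  shows "decomposable \<phi> \<delta> (Inf V) (Sup V) u (s [])"
proof (rule enforces_decomposable)
  fix x y
  assume "x \<in> set_pmf (s [])"
  then have "continuation s (x, y) \<in> continuations \<sigma>X"
    using assms(4) by (rule continuations.step[rotated])
  moreover obtain u' where "enforces \<phi> \<delta> (continuation s (x, y)) u'"
    using continuations_enforce[OF assms(1-3) calculation] by blast
  ultimately have "u' \<in> V"
    by (auto simp: V_def continuation_values_def)
  moreover have "bdd_below V" "bdd_above V"
    using bounded_continuation_values[of \<delta> \<phi> \<sigma>X] assms(1,2)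
    by (simp_all add: V_def bounded_imp_bdd_below bounded_imp_bdd_above)
  ultimately show "\<exists>u'\<in>{Inf V..Sup V}. enforces \<phi> \<delta> (continuation s (x, y)) u'"
    using \<open>enforces \<phi> \<delta> (continuation s (x, y)) u'\<close>
    by (intro bexI[of _ u']) (auto intro: cInf_lower cSup_upper)
qed (use assms in auto)

lemma autocratic_zero_discount:
  fixes \<phi> :: "'x::finite \<Rightarrow> 'y::finite \<Rightarrow> real"
  assumes "autocratic \<phi> 0 \<sigma>X"
  shows "mixed_payoff \<phi> (\<sigma>X []) y = 0"
proof -
  have "0 = discounted_payoff \<phi> 0 \<sigma>X (\<lambda>_. return_pmf y)"
    using assms by (simp add: autocratic_def)
  also have "\<dots> = (\<Sum>x\<in>UNIV. pmf (\<sigma>X []) x * ((1 - 0) * \<phi> x y +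
      0 * discounted_payoff \<phi> 0 (continuation \<sigma>X (x, y)) (continuation (\<lambda>_. return_pmf y) (x, y))))"
    by (rule discounted_payoff_pure_first_round) simp_all
  also have "\<dots> = mixed_payoff \<phi> (\<sigma>X []) y"
    by (simp add: mixed_payoff_def)
  finally show ?thesis ..
qed

lemma autocratic_extremal_decompositions:
  fixes \<phi> :: "'x::finite \<Rightarrow> 'y::finite \<Rightarrow> real"
  assumes "0 \<le> \<delta>" "\<delta> < 1" "autocratic \<phi> \<delta> \<sigma>X"
  obtains k K \<tau>p \<tau>m where "k \<le> 0" "0 \<le> K"
    "decomposable \<phi> \<delta> k K K \<tau>p" "decomposable \<phi> \<delta> k K k \<tau>m" "decomposable \<phi> \<delta> k K 0 (\<sigma>X [])"
proof (cases "\<delta> = 0")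
  case True
  with assms(3) have "decomposable \<phi> \<delta> 0 0 0 (\<sigma>X [])"
    by (simp add: decomposable_def autocratic_zero_discount)
  then show thesis
    by (intro that) auto
next
  case False
  with assms(1) have "0 < \<delta>" by simp
  define V where "V = continuation_values \<phi> \<delta> \<sigma>X"
  have "0 \<in> V"
    using assms(3) continuations.self by (auto simp: V_def continuation_values_def autocratic_iff_enforces_0)
  moreover have "bdd_below V" "bdd_above V"
    using bounded_continuation_values[OF assms(1,2), of \<phi> \<sigma>X]
    by (simp_all add: V_def bounded_imp_bdd_below bounded_imp_bdd_above)
  ultimately have bounds: "Inf V \<le> 0" "0 \<le> Sup V" "Inf V \<in> closure V" "Sup V \<in> closure V"
    by (auto intro: cInf_lower cSup_upper closure_contains_Inf closure_contains_Sup)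
  have "V \<subseteq> {u. \<exists>\<tau>. decomposable \<phi> \<delta> (Inf V) (Sup V) u \<tau>}"
    using continuation_values_decomposable[OF \<open>0 < \<delta>\<close> assms(2,3)]
    by (auto simp: V_def continuation_values_def)
  then have "closure V \<subseteq> {u. \<exists>\<tau>. decomposable \<phi> \<delta> (Inf V) (Sup V) u \<tau>}"
    using bounds by (intro closure_minimal closed_decomposable_values) (auto simp: assms(1))
  with bounds obtain \<tau>p \<tau>m where
    "decomposable \<phi> \<delta> (Inf V) (Sup V) (Sup V) \<tau>p" "decomposable \<phi> \<delta> (Inf V) (Sup V) (Inf V) \<tau>m"
    by blast
  moreover have "decomposable \<phi> \<delta> (Inf V) (Sup V) 0 (\<sigma>X [])"
    using continuation_values_decomposable[OF \<open>0 < \<delta>\<close> assms(2,3) continuations.self] assms(3)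
    by (simp add: V_def autocratic_iff_enforces_0)
  ultimately show thesis
    using bounds by (intro that) auto
qed

theorem theorem1:
  fixes \<phi> :: "'x::finite \<Rightarrow> 'y::finite \<Rightarrow> real"
    and \<delta> :: real
    and \<sigma>X :: "('x, 'y, 'x) behav_strategy"
  assumes "0 \<le> \<delta>" and "\<delta> < 1"
    and "autocratic \<phi> \<delta> \<sigma>X"
  shows "\<exists>\<sigma>0 (\<sigma>s :: 'x pmf \<Rightarrow> 'y \<Rightarrow> 'x pmf).
           two_point \<sigma>0 \<sigma>s \<and> autocratic \<phi> \<delta> (reactive_strategy \<sigma>0 \<sigma>s)"
proof -
  obtain k K \<tau>p \<tau>m where "k \<le> 0" "0 \<le> K"
    and plus: "decomposable \<phi> \<delta> k K K \<tau>p" and minus: "decomposable \<phi> \<delta> k K k \<tau>m"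
    and root: "decomposable \<phi> \<delta> k K 0 (\<sigma>X [])"
    using autocratic_extremal_decompositions[OF assms] by blast
  show ?thesis
  proof (cases "k = K")
    case True
    with \<open>k \<le> 0\<close> \<open>0 \<le> K\<close> root assms(2) have "mixed_payoff \<phi> (\<sigma>X []) y = 0" for y
      by (auto simp: decomposable_def)
    then show ?thesis
      using two_point_constant autocratic_constant_reactive[OF assms(1,2)] by blast
  next
    case False
    define p0 where "p0 = - k / (K - k)"
    have "k < K" "p0 \<in> {0..1}" "k + p0 * (K - k) = 0"
      using \<open>k \<le> 0\<close> \<open>0 \<le> K\<close> False by (auto simp: p0_def field_simps)
    then show ?thesis
      using two_point_reactive_enforces[OF assms(1,2) _ plus minus] autocratic_iff_enforces_0 by metis
  qed
qed

end
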